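(* Let $G$ be a finite group, $S\le G$ a subgroup and $B$ an $S$-Galois algebra over a field $k$ which is simple as an algebra. Then the sequence $1\to\mathrm{Aut}_S(B)\xrightarrow{\mathrm{Ind}}\mathrm{Aut}_G(\mathrm{Ind}_S^G(B))\xrightarrow{\pi}N_G(S)/S$ is exact. Moreover, the sequence $1\to\mathrm{Aut}_S(B)\to\mathrm{Aut}_G(\mathrm{Ind}_S^G(B))\to N_G(S)/S\to1$ is exact if and only if $B\cong B^{(g)}$ as $S$-algebras for all $g\in N_G(S)$.
   Context: An $S$-algebra is a $k$-algebra with $S$ acting by algebra automorphisms; $\mathrm{Aut}_S(B)$ = $S$-equivariant algebra automorphisms. An $S$-Galois algebra is a nonzero $S$-algebra $B$ with $B^S=k$ and $B\otimes_kB\to\prod_{s\in S}B$, $x\otimes y\mapsto(x(s\cdot y))_s$, bijective. $\mathrm{Ind}_S^G(B)=\{r:G\to B\mid r(sg)=s\cdot r(g)\ \forall s\in S,g\in G\}$ with pointwise operations and $(g\cdot r)(x)=r(xg)$. The map $\mathrm{Ind}$ sends $f\in\mathrm{Aut}_S(B)$ to $r\mapsto f\circ r$. For a right coset $Sg$, $\chi_{Sg}\in\mathrm{Ind}_S^G(B)$ is the function equal to $1$ on $Sg$ and $0$ elsewhere; since $B$ is simple these are exactly the central primitive idempotents of $\mathrm{Ind}_S^G(B)$, and $\pi(F)=Sg$ where $Sg$ is the coset with $F(\chi_S)=\chi_{Sg}$; this defines a group homomorphism $\pi:\mathrm{Aut}_G(\mathrm{Ind}_S^G(B))\to N_G(S)/S$.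 For $g\in N_G(S)$, $B^{(g)}$ is $B$ with the $S$-action $h\cdot_g b=(ghg^{-1})\cdot b$. *)

theory Defs
  imports "HOL-Algebra.Algebra"
begin

section \<open>k-algebras (type-based: B is the type 'b, scalars act via sc)\<close>

definition k_algebra :: "('k::field \<Rightarrow> 'b::ring_1 \<Rightarrow> 'b) \<Rightarrow> bool" where
  "k_algebra sc \<longleftrightarrow>
     (\<forall>a x y. sc a (x + y) = sc a x + sc a y) \<and>
     (\<forall>a b x. sc (a + b) x = sc a x + sc b x) \<and>
     (\<forall>a b x. sc (a * b) x = sc a (sc b x)) \<and>
     (\<forall>x. sc 1 x = x) \<and>
     (\<forall>a x y. sc a (x * y) = sc a x * y \<and> sc a (x * y) = x * sc a y)"

definition alg_hom :: "('k::field \<Rightarrow> 'b::ring_1 \<Rightarrow> 'b) \<Rightarrow> ('b \<Rightarrow> 'b) \<Rightarrow> bool" where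
  "alg_hom sc f \<longleftrightarrow>
     (\<forall>x y. f (x + y) = f x + f y) \<and> (\<forall>x y. f (x * y) = f x * f y) \<and> f 1 = 1 \<and>
     (\<forall>a x. f (sc a x) = sc a (f x))"

text \<open>Simple algebra: the only two-sided ideals are 0 and B (B nonzero since 'b is ring_1).\<close>
definition simple_algebra :: "('k::field \<Rightarrow> 'b::ring_1 \<Rightarrow> 'b) \<Rightarrow> bool" where
  "simple_algebra sc \<longleftrightarrow>
     (\<forall>I::'b set. (0 \<in> I \<and> (\<forall>x\<in>I. \<forall>y\<in>I. x - y \<in> I) \<and> (\<forall>x\<in>I. \<forall>a. sc a x \<in> I) \<and>
                 (\<forall>x\<in>I. \<forall>b. b * x \<in> I \<and> x * b \<in> I))
               \<longrightarrow> I = {0} \<or> I = UNIV)"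

definition S_algebra :: "'g monoid \<Rightarrow> 'g set \<Rightarrow> ('k::field \<Rightarrow> 'b::ring_1 \<Rightarrow> 'b) \<Rightarrow> ('g \<Rightarrow> 'b \<Rightarrow> 'b) \<Rightarrow> bool" where
  "S_algebra G S sc act \<longleftrightarrow> k_algebra sc \<and>
     (\<forall>s\<in>S. bij (act s) \<and> alg_hom sc (act s)) \<and> act \<one>\<^bsub>G\<^esub> = id \<and>
     (\<forall>s\<in>S. \<forall>t\<in>S. act (s \<otimes>\<^bsub>G\<^esub> t) = act s \<circ> act t)"

section \<open>Tensor product B \<otimes>_k B as free vector space on B x B modulo bilinearity\<close>

definition tensor_free :: "('b \<times> 'b \<Rightarrow> 'k::field) set" where
  "tensor_free = {c. finite {p. c p \<noteq> 0}}"

definition delta :: "'b \<times> 'b \<Rightarrow> 'b \<times> 'b \<Rightarrow> 'k::field" where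
  "delta p = (\<lambda>q. if q = p then 1 else 0)"

inductive_set tensor_rel :: "('k::field \<Rightarrow> 'b::ring_1 \<Rightarrow> 'b) \<Rightarrow> ('b \<times> 'b \<Rightarrow> 'k) set"
  for sc :: "'k::field \<Rightarrow> 'b::ring_1 \<Rightarrow> 'b" where
  zero: "(\<lambda>_. 0) \<in> tensor_rel sc"
| add: "c \<in> tensor_rel sc \<Longrightarrow> d \<in> tensor_rel sc \<Longrightarrow> (\<lambda>p. c p + d p) \<in> tensor_rel sc"
| smult: "c \<in> tensor_rel sc \<Longrightarrow> (\<lambda>p. a * c p) \<in> tensor_rel sc"
| gen1: "(\<lambda>q. delta (x + x', y) q - delta (x, y) q - delta (x', y) q) \<in> tensor_rel sc"
| gen2: "(\<lambda>q. delta (x, y + y') q - delta (x, y) q - delta (x, y') q) \<in> tensor_rel sc"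
| gen3: "(\<lambda>q. delta (sc a x, y) q - a * delta (x, y) q) \<in> tensor_rel sc"
| gen4: "(\<lambda>q. delta (x, sc a y) q - a * delta (x, y) q) \<in> tensor_rel sc"

text \<open>The map (free space on B x B) \<rightarrow> \<Prod>_{s\<in>S} B, (x,y) \<mapsto> (x (s.y))_s, extended linearly.
  Elements of \<Prod>_{s\<in>S} B are functions 'g \<Rightarrow> 'b vanishing outside S.\<close>
definition galois_map :: "'g set \<Rightarrow> ('k::field \<Rightarrow> 'b::ring_1 \<Rightarrow> 'b) \<Rightarrow> ('g \<Rightarrow> 'b \<Rightarrow> 'b)
    \<Rightarrow> ('b \<times> 'b \<Rightarrow> 'k) \<Rightarrow> 'g \<Rightarrow> 'b" where
  "galois_map S sc act c =
     (\<lambda>s. if s \<in> S then (\<Sum>p\<in>{p. c p \<noteq> 0}. sc (c p) (fst p * act s (snd p))) else 0)"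

text \<open>The induced map B \<otimes>_k B = free / rel \<rightarrow> \<Prod>_S B is bijective.\<close>
definition galois_bij :: "'g set \<Rightarrow> ('k::field \<Rightarrow> 'b::ring_1 \<Rightarrow> 'b) \<Rightarrow> ('g \<Rightarrow> 'b \<Rightarrow> 'b) \<Rightarrow> bool" where
  "galois_bij S sc act \<longleftrightarrow>
     (\<forall>c\<in>tensor_free. galois_map S sc act c = (\<lambda>_. 0) \<longleftrightarrow> c \<in> tensor_rel sc) \<and>
     galois_map S sc act ` tensor_free = {f. \<forall>s. s \<notin> S \<longrightarrow> f s = 0}"

definition galois_algebra :: "'g monoid \<Rightarrow> 'g set \<Rightarrow> ('k::field \<Rightarrow> 'b::ring_1 \<Rightarrow> 'b) \<Rightarrow> ('g \<Rightarrow> 'b \<Rightarrow> 'b) \<Rightarrow> bool" where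
  "galois_algebra G S sc act \<longleftrightarrow> S_algebra G S sc act \<and>
     {b. \<forall>s\<in>S. act s b = b} = range (\<lambda>a. sc a 1) \<and>
     galois_bij S sc act"

text \<open>Functions G \<rightarrow> B are represented as functions 'g \<Rightarrow> 'b that vanish outside carrier G.\<close>
definition ind_carrier :: "'g monoid \<Rightarrow> 'g set \<Rightarrow> ('g \<Rightarrow> 'b::ring_1 \<Rightarrow> 'b) \<Rightarrow> ('g \<Rightarrow> 'b) set" where
  "ind_carrier G S act = {r. (\<forall>x. x \<notin> carrier G \<longrightarrow> r x = 0) \<and>
      (\<forall>s\<in>S. \<forall>g\<in>carrier G. r (s \<otimes>\<^bsub>G\<^esub> g) = act s (r g))}"

definition ind_one :: "'g monoid \<Rightarrow> 'g \<Rightarrow> 'b::ring_1" where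
  "ind_one G = (\<lambda>x. if x \<in> carrier G then 1 else 0)"

definition ind_act :: "'g monoid \<Rightarrow> 'g \<Rightarrow> ('g \<Rightarrow> 'b::ring_1) \<Rightarrow> 'g \<Rightarrow> 'b" where
  "ind_act G g r = (\<lambda>x. if x \<in> carrier G then r (x \<otimes>\<^bsub>G\<^esub> g) else 0)"

definition AutS :: "'g set \<Rightarrow> ('k::field \<Rightarrow> 'b::ring_1 \<Rightarrow> 'b) \<Rightarrow> ('g \<Rightarrow> 'b \<Rightarrow> 'b) \<Rightarrow> ('b \<Rightarrow> 'b) set" where
  "AutS S sc act = {f. bij f \<and> alg_hom sc f \<and> (\<forall>s\<in>S. \<forall>b. f (act s b) = act s (f b))}"

definition AutS_group :: "'g set \<Rightarrow> ('k::field \<Rightarrow> 'b::ring_1 \<Rightarrow> 'b) \<Rightarrow> ('g \<Rightarrow> 'b \<Rightarrow> 'b) \<Rightarrow> ('b \<Rightarrow> 'b) monoid" where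
  "AutS_group S sc act = \<lparr>carrier = AutS S sc act, monoid.mult = (\<circ>), one = id\<rparr>"

definition AutG :: "'g monoid \<Rightarrow> 'g set \<Rightarrow> ('k::field \<Rightarrow> 'b::ring_1 \<Rightarrow> 'b) \<Rightarrow> ('g \<Rightarrow> 'b \<Rightarrow> 'b)
    \<Rightarrow> (('g \<Rightarrow> 'b) \<Rightarrow> ('g \<Rightarrow> 'b)) set" where
  "AutG G S sc act = (let I = ind_carrier G S act in
     {F. F \<in> extensional I \<and> bij_betw F I I \<and>
         (\<forall>r\<in>I. \<forall>r'\<in>I. F (\<lambda>x. r x + r' x) = (\<lambda>x. F r x + F r' x)) \<and>
         (\<forall>r\<in>I. \<forall>r'\<in>I. F (\<lambda>x. r x * r' x) = (\<lambda>x. F r x * F r' x)) \<and>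
         F (ind_one G) = ind_one G \<and>
         (\<forall>a. \<forall>r\<in>I. F (\<lambda>x. sc a (r x)) = (\<lambda>x. sc a (F r x))) \<and>
         (\<forall>g\<in>carrier G. \<forall>r\<in>I. F (ind_act G g r) = ind_act G g (F r))})"

definition AutG_group :: "'g monoid \<Rightarrow> 'g set \<Rightarrow> ('k::field \<Rightarrow> 'b::ring_1 \<Rightarrow> 'b) \<Rightarrow> ('g \<Rightarrow> 'b \<Rightarrow> 'b)
    \<Rightarrow> (('g \<Rightarrow> 'b) \<Rightarrow> ('g \<Rightarrow> 'b)) monoid" where
  "AutG_group G S sc act = \<lparr>carrier = AutG G S sc act,
      monoid.mult = (\<lambda>F F'. restrict (F \<circ> F') (ind_carrier G S act)),
      one = restrict id (ind_carrier G S act)\<rparr>"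

definition ind_map :: "'g monoid \<Rightarrow> 'g set \<Rightarrow> ('g \<Rightarrow> 'b::ring_1 \<Rightarrow> 'b) \<Rightarrow> ('b \<Rightarrow> 'b)
    \<Rightarrow> ('g \<Rightarrow> 'b) \<Rightarrow> ('g \<Rightarrow> 'b)" where
  "ind_map G S act f = restrict (\<lambda>r. f \<circ> r) (ind_carrier G S act)"

definition chi :: "'g set \<Rightarrow> 'g \<Rightarrow> 'b::ring_1" where
  "chi C = (\<lambda>x. if x \<in> C then 1 else 0)"

definition pi_map :: "'g monoid \<Rightarrow> 'g set \<Rightarrow> (('g \<Rightarrow> 'b::ring_1) \<Rightarrow> ('g \<Rightarrow> 'b)) \<Rightarrow> 'g set" where
  "pi_map G S F = (THE C. C \<in> rcosets\<^bsub>G\<^esub> S \<and> F (chi S) = chi C)"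

definition normalizer_quot :: "'g monoid \<Rightarrow> 'g set \<Rightarrow> 'g set monoid" where
  "normalizer_quot G S = (G\<lparr>carrier := normalizer G S\<rparr>) Mod S"

definition iso_twist :: "'g monoid \<Rightarrow> 'g set \<Rightarrow> ('k::field \<Rightarrow> 'b::ring_1 \<Rightarrow> 'b) \<Rightarrow> ('g \<Rightarrow> 'b \<Rightarrow> 'b) \<Rightarrow> 'g \<Rightarrow> bool" where
  "iso_twist G S sc act g \<longleftrightarrow> (\<exists>\<phi>. bij \<phi> \<and> alg_hom sc \<phi> \<and>
     (\<forall>s\<in>S. \<forall>b. \<phi> (act s b) = act (g \<otimes>\<^bsub>G\<^esub> s \<otimes>\<^bsub>G\<^esub> inv\<^bsub>G\<^esub> g) (\<phi> b)))"

end

theory Submission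
  imports Defs
begin

text \<open>Because \<open>B\<close> is simple, the central idempotents of \<open>Ind_S^G(B)\<close> are the sums of the
  characteristic functions \<open>chi (S #> g)\<close> of right cosets. A \<open>G\<close>-equivariant automorphism \<open>F\<close>
  permutes the primitive ones, so \<open>F (chi S) = chi (S #> g)\<close>, and equivariance under \<open>S\<close> forces
  \<open>g\<close> to normalize \<open>S\<close>. Identifying \<open>B\<close> with \<open>chi S \<cdot> Ind_S^G(B)\<close>, applying \<open>F\<close> and
  evaluating at \<open>g\<close> gives an isomorphism \<open>B \<cong> B\<^sup>(\<^sup>g\<^sup>)\<close>; for \<open>g \<in> S\<close> this is an element
  \<open>f\<close> of \<open>Aut_S(B)\<close> with \<open>F = Ind f\<close>. Conversely an isomorphism \<open>\<phi> : B \<cong> B\<^sup>(\<^sup>g\<^sup>)\<close>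
  induces the automorphism \<open>r \<mapsto> \<phi> \<circ> r \<circ> (\<lambda>x. inv g \<otimes> x)\<close>, which maps to \<open>S g\<close>.\<close>

lemma alg_hom_zero: "alg_hom sc f \<Longrightarrow> f 0 = 0"
  using alg_hom_def[of sc f] by (metis add.right_neutral add_left_cancel)

lemma alg_hom_diff: "alg_hom sc f \<Longrightarrow> f (x - y) = f x - f y"
  using alg_hom_def[of sc f] by (metis add_diff_cancel diff_add_cancel)

lemma alg_hom_inv_into:
  assumes "bij f" "alg_hom sc f" shows "alg_hom sc (inv_into UNIV f)"
proof -
  have f_inv: "\<And>x. f (inv_into UNIV f x) = x" using assms(1) by (simp add: bij_is_surj surj_f_inv_f)
  have inv_f: "\<And>x. inv_into UNIV f (f x) = x" using assms(1) by (simp add: bij_is_inj)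
  show ?thesis
    using assms(2) unfolding alg_hom_def by (metis f_inv inv_f)
qed

lemma k_algebra_scale_zero: "k_algebra sc \<Longrightarrow> sc a 0 = 0"
  unfolding k_algebra_def by (metis add.right_neutral add_left_cancel)

text \<open>Since \<open>e\<close> is central, \<open>B e\<close> is a two-sided ideal, so it is \<open>0\<close> or \<open>B\<close>.\<close>
lemma simple_algebra_central_idem:
  fixes sc :: "'k::field \<Rightarrow> 'b::ring_1 \<Rightarrow> 'b" and e :: 'b
  assumes k: "k_algebra sc" and simple: "simple_algebra sc"
    and idem: "e * e = e" and central: "\<And>b. e * b = b * e"
  shows "e = 0 \<or> e = 1"
proof -
  let ?J = "range (\<lambda>b. b * e)"
  have "?J = {0} \<or> ?J = UNIV"
    using simple[unfolded simple_algebra_def, rule_format, of ?J]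
  proof
    show "0 \<in> ?J \<and> (\<forall>x\<in>?J. \<forall>y\<in>?J. x - y \<in> ?J) \<and> (\<forall>x\<in>?J. \<forall>a. sc a x \<in> ?J) \<and>
      (\<forall>x\<in>?J. \<forall>b. b * x \<in> ?J \<and> x * b \<in> ?J)"
    proof (intro conjI ballI allI)
      show "0 \<in> ?J" by (rule range_eqI[of _ _ 0]) simp
    next
      fix x y assume "x \<in> ?J" "y \<in> ?J"
      then obtain b c where "x = b * e" "y = c * e" by auto
      thus "x - y \<in> ?J" by (auto intro: range_eqI[of _ _ "b - c"] simp: algebra_simps)
    next
      fix x a assume "x \<in> ?J"
      then obtain b where "x = b * e" by auto
      thus "sc a x \<in> ?J" using k by (auto intro: range_eqI[of _ _ "sc a b"] simp: k_algebra_def)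
    next
      fix x b assume "x \<in> ?J"
      then obtain c where "x = c * e" by auto
      thus "b * x \<in> ?J" by (auto intro: range_eqI[of _ _ "b * c"] simp: mult.assoc)
    next
      fix x b assume "x \<in> ?J"
      then obtain c where "x = c * e" by auto
      hence "x * b = (c * b) * e" by (simp add: mult.assoc central)
      thus "x * b \<in> ?J" by auto
    qed
  qed auto
  thus ?thesis
  proof
    assume "?J = {0}" hence "1 * e = 0" by blast
    thus ?thesis by simp
  next
    assume "?J = UNIV"
    then obtain b where b: "1 = b * e" by (metis UNIV_I imageE)
    have "e = b * e * e" using b by simp
    also have "\<dots> = b * e" by (simp add: mult.assoc idem)
    finally show ?thesis using b by simp
  qed
qed

lemma chi_inj:
  assumes "chi C = (chi D :: 'g \<Rightarrow> 'b::ring_1)" shows "C = D"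
proof -
  have "x \<in> C \<longleftrightarrow> x \<in> D" for x
    using fun_cong[OF assms, of x] by (simp add: chi_def split: if_splits)
  thus ?thesis by blast
qed

lemma chi_mult_self: "(\<lambda>x. chi C x * chi C x) = (chi C :: 'g \<Rightarrow> 'b::ring_1)"
  by (auto simp: chi_def)

lemma chi_mult_commute: "(\<lambda>x. chi C x * r x) = (\<lambda>x. r x * (chi C x :: 'b::ring_1))"
  by (auto simp: chi_def)

context group
begin

lemma normalizer_iff:
  "H \<subseteq> carrier G \<Longrightarrow> g \<in> normalizer G H \<longleftrightarrow> g \<in> carrier G \<and> r_coset G (l_coset G g H) (inv g) = H"
  unfolding normalizer_def stabilizer_def by auto

lemma normalizer_conj:
  assumes H: "H \<subseteq> carrier G" and g: "g \<in> normalizer G H" and h: "h \<in> H"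
  shows "g \<otimes> h \<otimes> inv g \<in> H"
proof -
  have "g \<otimes> h \<otimes> inv g \<in> r_coset G (l_coset G g H) (inv g)"
    using h unfolding l_coset_def r_coset_def by blast
  thus ?thesis using normalizer_iff[OF H] g by simp
qed

lemma normalizer_conj_inv:
  assumes H: "H \<subseteq> carrier G" and g: "g \<in> normalizer G H" and h: "h \<in> H"
  shows "inv g \<otimes> h \<otimes> g \<in> H"
proof -
  have "inv g \<in> normalizer G H"
    using subgroup.m_inv_closed[OF normalizer_imp_subgroup[OF H] g] by simp
  moreover have "g \<in> carrier G" using normalizer_iff[OF H] g by blast
  ultimately show ?thesis using normalizer_conj[OF H _ h, of "inv g"] by simp
qed

lemma normalizerI_finite:
  assumes fin: "finite H" and H: "H \<subseteq> carrier G" and g: "g \<in> carrier G"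
    and conj: "\<And>h. h \<in> H \<Longrightarrow> g \<otimes> h \<otimes> inv g \<in> H"
  shows "g \<in> normalizer G H"
proof -
  have inj: "inj_on (\<lambda>h. g \<otimes> h \<otimes> inv g) H"
  proof (rule inj_onI)
    fix x y assume "x \<in> H" "y \<in> H" "g \<otimes> x \<otimes> inv g = g \<otimes> y \<otimes> inv g"
    hence "g \<otimes> x = g \<otimes> y" using H g by (simp add: r_cancel[symmetric] subsetD)
    thus "x = y" using \<open>x \<in> H\<close> \<open>y \<in> H\<close> H g by (simp add: subsetD)
  qed
  have image: "(\<lambda>h. g \<otimes> h \<otimes> inv g) ` H \<subseteq> H" using conj by blast
  have "r_coset G (l_coset G g H) (inv g) = (\<lambda>h. g \<otimes> h \<otimes> inv g) ` H"
    unfolding l_coset_def r_coset_def by auto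
  also have "\<dots> = H" using endo_inj_surj[OF fin image inj] .
  finally show ?thesis using normalizer_iff[OF H] g by blast
qed

lemma rcos_mult_normalizer:
  assumes H: "subgroup H G" and a: "a \<in> normalizer G H" and b: "b \<in> normalizer G H"
  shows "(H #> a) <#> (H #> b) = H #> (a \<otimes> b)"
proof -
  interpret N: normal H "G\<lparr>carrier := normalizer G H\<rparr>"
    using subgroup_in_normalizer H by blast
  have "(H #>\<^bsub>G\<lparr>carrier := normalizer G H\<rparr>\<^esub> a) <#>\<^bsub>G\<lparr>carrier := normalizer G H\<rparr>\<^esub>
      (H #>\<^bsub>G\<lparr>carrier := normalizer G H\<rparr>\<^esub> b)
      = H #>\<^bsub>G\<lparr>carrier := normalizer G H\<rparr>\<^esub> (a \<otimes>\<^bsub>G\<lparr>carrier := normalizer G H\<rparr>\<^esub> b)"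
    using N.rcos_sum a b by simp
  thus ?thesis by (simp add: r_coset_def set_mult_def)
qed

end

lemma normalizer_quot_carrier:
  "carrier (normalizer_quot G H) = (\<lambda>g. H #>\<^bsub>G\<^esub> g) ` normalizer G H"
  unfolding normalizer_quot_def FactGroup_def RCOSETS_def r_coset_def by auto

lemma normalizer_quot_one: "\<one>\<^bsub>normalizer_quot G H\<^esub> = H"
  unfolding normalizer_quot_def FactGroup_def by simp

lemma normalizer_quot_mult: "M \<otimes>\<^bsub>normalizer_quot G H\<^esub> M' = M <#>\<^bsub>G\<^esub> M'"
  unfolding normalizer_quot_def FactGroup_def set_mult_def by simp

lemma pi_map_eq:
  fixes G (structure)
  assumes "group G" "H \<subseteq> carrier G" "g \<in> carrier G"
    "F (chi H) = (chi (H #> g) :: 'g \<Rightarrow> 'b::ring_1)"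
  shows "pi_map G H F = H #> g"
  unfolding pi_map_def
proof (rule the_equality)
  show "H #> g \<in> rcosets\<^bsub>G\<^esub> H \<and> F (chi H) = chi (H #> g)"
    using group.rcosetsI[OF assms(1-3)] assms(4) by blast
next
  fix C assume "C \<in> rcosets\<^bsub>G\<^esub> H \<and> F (chi H) = chi C"
  hence "chi C = (chi (H #> g) :: 'g \<Rightarrow> 'b)" using assms(4) by simp
  thus "C = H #> g" by (rule chi_inj)
qed

lemma ind_act_chi_rcos:
  fixes G (structure)
  assumes G: "group G" and H: "subgroup H G" and a: "a \<in> carrier G" and h: "h \<in> carrier G"
  shows "ind_act G h (chi (H #> a)) = (chi (H #> (a \<otimes> inv h)) :: 'g \<Rightarrow> 'b::ring_1)"
proof
  interpret group G by (fact G)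
  fix x show "ind_act G h (chi (H #> a)) x = (chi (H #> (a \<otimes> inv h)) x :: 'b)"
  proof (cases "x \<in> carrier G")
    case True
    have "(x \<otimes> h \<in> H #> a) = (x \<otimes> h \<otimes> inv a \<in> H)"
      using subgroup.rcos_module[OF H G] True a h by simp
    moreover have "(x \<in> H #> (a \<otimes> inv h)) = (x \<otimes> inv (a \<otimes> inv h) \<in> H)"
      using subgroup.rcos_module[OF H G] True a h by simp
    moreover have "x \<otimes> inv (a \<otimes> inv h) = x \<otimes> h \<otimes> inv a"
      using True a h by (simp add: inv_mult_group m_assoc)
    ultimately show ?thesis using True by (simp add: ind_act_def chi_def)
  next
    case False
    hence "x \<notin> H #> (a \<otimes> inv h)" using r_coset_subset_G[OF subgroup.subset[OF H]] a h by blast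
    thus ?thesis using False by (simp add: ind_act_def chi_def)
  qed
qed

locale ind_setting = group G for G :: "'g monoid" (structure) +
  fixes S :: "'g set" and sc :: "'k::field \<Rightarrow> 'b::ring_1 \<Rightarrow> 'b" and act :: "'g \<Rightarrow> 'b \<Rightarrow> 'b"
  assumes finite_carrier: "finite (carrier G)" and subgroup_S: "subgroup S G"
    and S_alg: "S_algebra G S sc act" and simple: "simple_algebra sc"
begin

abbreviation Ind :: "('g \<Rightarrow> 'b) set" where "Ind \<equiv> ind_carrier G S act"

abbreviation AutInd :: "(('g \<Rightarrow> 'b) \<Rightarrow> 'g \<Rightarrow> 'b) set" where "AutInd \<equiv> AutG G S sc act"

lemma k_alg: "k_algebra sc"
  using S_alg unfolding S_algebra_def by blast

lemma S_subset: "S \<subseteq> carrier G"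
  using subgroup_S subgroup.subset by blast

lemma S_carrier [simp]: "s \<in> S \<Longrightarrow> s \<in> carrier G"
  using S_subset by blast

lemma S_one [simp]: "\<one> \<in> S"
  by (rule subgroup.one_closed[OF subgroup_S])

lemma S_mult [simp]: "s \<in> S \<Longrightarrow> t \<in> S \<Longrightarrow> s \<otimes> t \<in> S"
  by (rule subgroup.m_closed[OF subgroup_S])

lemma S_inv [simp]: "s \<in> S \<Longrightarrow> inv s \<in> S"
  using subgroup.m_inv_closed[OF subgroup_S] by blast

lemma S_mult_left_iff: "s \<in> S \<Longrightarrow> y \<in> carrier G \<Longrightarrow> s \<otimes> y \<in> S \<longleftrightarrow> y \<in> S"
  by (metis S_inv S_mult S_carrier inv_closed l_inv l_one m_assoc)

lemma S_mult_right_iff: "s \<in> S \<Longrightarrow> y \<in> carrier G \<Longrightarrow> y \<otimes> s \<in> S \<longleftrightarrow> y \<in> S"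
  by (metis S_inv S_mult S_carrier inv_closed r_inv r_one m_assoc)

lemma rcos_S_iff: "x \<in> carrier G \<Longrightarrow> g \<in> carrier G \<Longrightarrow> x \<in> S #> g \<longleftrightarrow> x \<otimes> inv g \<in> S"
  using subgroup.rcos_module[OF subgroup_S is_group] by blast

lemma rcos_S_elem: "y \<in> S #> g \<Longrightarrow> \<exists>s\<in>S. y = s \<otimes> g"
  unfolding r_coset_def by auto

lemma act_alg_hom: "s \<in> S \<Longrightarrow> alg_hom sc (act s)"
  using S_alg unfolding S_algebra_def by blast

lemma act_one [simp]: "act \<one> b = b"
  using S_alg unfolding S_algebra_def by simp

lemma act_mult: "s \<in> S \<Longrightarrow> t \<in> S \<Longrightarrow> act (s \<otimes> t) b = act s (act t b)"
  using S_alg unfolding S_algebra_def by simp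

lemma act_zero [simp]: "s \<in> S \<Longrightarrow> act s 0 = 0"
  using act_alg_hom alg_hom_zero by blast

lemma act_add: "s \<in> S \<Longrightarrow> act s (x + y) = act s x + act s y"
  using act_alg_hom unfolding alg_hom_def by blast

lemma act_times: "s \<in> S \<Longrightarrow> act s (x * y) = act s x * act s y"
  using act_alg_hom unfolding alg_hom_def by blast

lemma act_scale: "s \<in> S \<Longrightarrow> act s (sc a x) = sc a (act s x)"
  using act_alg_hom unfolding alg_hom_def by blast

lemma act_unit [simp]: "s \<in> S \<Longrightarrow> act s 1 = 1"
  using act_alg_hom unfolding alg_hom_def by blast

lemma scale_zero [simp]: "sc a 0 = 0"
  using k_algebra_scale_zero[OF k_alg] .

lemma mult_inv_cancel_left [simp]: "x \<in> carrier G \<Longrightarrow> y \<in> carrier G \<Longrightarrow> x \<otimes> (inv x \<otimes> y) = y"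
  by (simp add: m_assoc[symmetric])

lemma inv_mult_cancel_left [simp]: "x \<in> carrier G \<Longrightarrow> y \<in> carrier G \<Longrightarrow> inv x \<otimes> (x \<otimes> y) = y"
  by (simp add: m_assoc[symmetric])

lemma normalizer_carrier: "g \<in> normalizer G S \<Longrightarrow> g \<in> carrier G"
  using normalizer_iff[OF S_subset] by blast

subsection \<open>The induced algebra\<close>

lemma Ind_outside: "r \<in> Ind \<Longrightarrow> x \<notin> carrier G \<Longrightarrow> r x = 0"
  unfolding ind_carrier_def by blast

lemma Ind_equivariant: "r \<in> Ind \<Longrightarrow> s \<in> S \<Longrightarrow> g \<in> carrier G \<Longrightarrow> r (s \<otimes> g) = act s (r g)"
  unfolding ind_carrier_def by blast

lemma IndI:
  "(\<And>x. x \<notin> carrier G \<Longrightarrow> r x = 0) \<Longrightarrow>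
    (\<And>s g. s \<in> S \<Longrightarrow> g \<in> carrier G \<Longrightarrow> r (s \<otimes> g) = act s (r g)) \<Longrightarrow> r \<in> Ind"
  unfolding ind_carrier_def by blast

lemma Ind_zero: "(\<lambda>x. 0) \<in> Ind"
  by (rule IndI) auto

lemma Ind_add: "r \<in> Ind \<Longrightarrow> r' \<in> Ind \<Longrightarrow> (\<lambda>x. r x + r' x) \<in> Ind"
  by (rule IndI) (auto simp: Ind_outside Ind_equivariant act_add)

lemma Ind_mult: "r \<in> Ind \<Longrightarrow> r' \<in> Ind \<Longrightarrow> (\<lambda>x. r x * r' x) \<in> Ind"
  by (rule IndI) (auto simp: Ind_outside Ind_equivariant act_times)

lemma Ind_scale: "r \<in> Ind \<Longrightarrow> (\<lambda>x. sc a (r x)) \<in> Ind"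
  by (rule IndI) (auto simp: Ind_outside Ind_equivariant act_scale)

lemma Ind_one: "ind_one G \<in> Ind"
  by (rule IndI) (auto simp: ind_one_def)

lemma Ind_ind_act: "g \<in> carrier G \<Longrightarrow> r \<in> Ind \<Longrightarrow> ind_act G g r \<in> Ind"
  by (rule IndI) (auto simp: ind_act_def m_assoc Ind_equivariant)

lemma Ind_comp:
  assumes "alg_hom sc f" "\<And>s b. s \<in> S \<Longrightarrow> f (act s b) = act s (f b)" "r \<in> Ind"
  shows "f \<circ> r \<in> Ind"
  by (rule IndI) (use assms in \<open>auto simp: Ind_outside Ind_equivariant alg_hom_zero\<close>)

lemma Ind_chi_rcos: "g \<in> carrier G \<Longrightarrow> chi (S #> g) \<in> Ind"
proof (rule IndI)
  fix x assume "g \<in> carrier G" "x \<notin> carrier G"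
  thus "chi (S #> g) x = 0" using r_coset_subset_G[OF S_subset] unfolding chi_def by auto
next
  fix s y assume "g \<in> carrier G" "s \<in> S" "y \<in> carrier G"
  hence "s \<otimes> y \<in> S #> g \<longleftrightarrow> y \<in> S #> g" by (simp add: rcos_S_iff m_assoc S_mult_left_iff)
  thus "chi (S #> g) (s \<otimes> y) = act s (chi (S #> g) y)" using \<open>s \<in> S\<close> unfolding chi_def by auto
qed

lemma Ind_chi_S: "chi S \<in> Ind"
  using Ind_chi_rcos[OF one_closed] S_subset by simp

lemma ind_act_chi_S: "t \<in> S \<Longrightarrow> ind_act G t (chi S) = (chi S :: 'g \<Rightarrow> 'b)"
  by (rule ext) (auto simp: ind_act_def chi_def S_mult_right_iff)

lemma chi_rcos_ind_act: "b \<in> carrier G \<Longrightarrow> chi (S #> b) = (ind_act G (inv b) (chi S) :: 'g \<Rightarrow> 'b)"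
  by (rule sym) (use ind_act_chi_rcos[OF is_group subgroup_S one_closed inv_closed, of b] S_subset in simp)

text \<open>The element of the induced algebra supported on the coset \<open>S x\<close> with value \<open>b\<close> at \<open>x\<close>.\<close>
definition ind_point :: "'g \<Rightarrow> 'b \<Rightarrow> 'g \<Rightarrow> 'b" where
  "ind_point x b = (\<lambda>y. if y \<in> carrier G \<and> y \<otimes> inv x \<in> S then act (y \<otimes> inv x) b else 0)"

lemma Ind_ind_point: "x \<in> carrier G \<Longrightarrow> ind_point x b \<in> Ind"
proof (rule IndI)
  fix y assume "y \<notin> carrier G" thus "ind_point x b y = 0" unfolding ind_point_def by simp
next
  fix s y assume "x \<in> carrier G" "s \<in> S" "y \<in> carrier G"
  moreover have "s \<otimes> y \<otimes> inv x = s \<otimes> (y \<otimes> inv x)" using calculation by (simp add: m_assoc)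
  ultimately show "ind_point x b (s \<otimes> y) = act s (ind_point x b y)"
    unfolding ind_point_def by (auto simp: S_mult_left_iff act_mult)
qed

lemma ind_point_self [simp]: "x \<in> carrier G \<Longrightarrow> ind_point x b x = b"
  unfolding ind_point_def by simp

lemma ind_point_outside: "x \<in> carrier G \<Longrightarrow> y \<notin> S #> x \<Longrightarrow> ind_point x b y = 0"
  unfolding ind_point_def using rcos_S_iff by auto

lemma ind_point_one: "ind_point \<one> b = (\<lambda>y. if y \<in> S then act y b else 0)"
  unfolding ind_point_def by (rule ext) auto

lemma Ind_ind_point_one: "ind_point \<one> b \<in> Ind"
  using Ind_ind_point[OF one_closed] .

lemma ind_point_one_add: "ind_point \<one> (b + c) = (\<lambda>x. ind_point \<one> b x + ind_point \<one> c x)"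
  unfolding ind_point_one by (rule ext) (simp add: act_add)

lemma ind_point_one_mult: "ind_point \<one> (b * c) = (\<lambda>x. ind_point \<one> b x * ind_point \<one> c x)"
  unfolding ind_point_one by (rule ext) (simp add: act_times)

lemma ind_point_one_scale: "ind_point \<one> (sc a b) = (\<lambda>x. sc a (ind_point \<one> b x))"
  unfolding ind_point_one by (rule ext) (simp add: act_scale)

lemma ind_point_one_unit: "ind_point \<one> 1 = chi S"
  unfolding ind_point_one chi_def by (rule ext) simp

lemma ind_point_one_mult_chi_S: "(\<lambda>x. ind_point \<one> b x * chi S x) = ind_point \<one> b"
  unfolding ind_point_one chi_def by (rule ext) simp

lemma ind_act_ind_point_one: "t \<in> S \<Longrightarrow> ind_act G t (ind_point \<one> b) = ind_point \<one> (act t b)"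
  unfolding ind_point_one ind_act_def by (rule ext) (auto simp: S_mult_right_iff act_mult)

lemma Ind_supported_on_S:
  assumes "d \<in> Ind" "(\<lambda>x. d x * chi S x) = d"
  shows "d = ind_point \<one> (d \<one>)"
proof
  fix x show "d x = ind_point \<one> (d \<one>) x"
  proof (cases "x \<in> S")
    case True
    thus ?thesis using Ind_equivariant[OF assms(1) True one_closed] by (simp add: ind_point_one)
  next
    case False
    thus ?thesis using fun_cong[OF assms(2), of x] by (simp add: ind_point_one chi_def)
  qed
qed

subsection \<open>Automorphisms of the induced algebra\<close>

context
  fixes F assumes F: "F \<in> AutInd"
begin

lemma AutG_D:
  "F \<in> extensional Ind" "bij_betw F Ind Ind"
  "r \<in> Ind \<Longrightarrow> r' \<in> Ind \<Longrightarrow> F (\<lambda>x. r x + r' x) = (\<lambda>x. F r x + F r' x)"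
  "r \<in> Ind \<Longrightarrow> r' \<in> Ind \<Longrightarrow> F (\<lambda>x. r x * r' x) = (\<lambda>x. F r x * F r' x)"
  "r \<in> Ind \<Longrightarrow> F (\<lambda>x. sc a (r x)) = (\<lambda>x. sc a (F r x))"
  "g \<in> carrier G \<Longrightarrow> r \<in> Ind \<Longrightarrow> F (ind_act G g r) = ind_act G g (F r)"
  using F unfolding AutG_def Let_def mem_Collect_eq by (elim conjE; simp)+

lemmas AutG_extensional = AutG_D(1) and AutG_add = AutG_D(3) and AutG_mult = AutG_D(4)
  and AutG_scale = AutG_D(5) and AutG_ind_act = AutG_D(6)

lemma AutG_Ind: "r \<in> Ind \<Longrightarrow> F r \<in> Ind"
  using AutG_D(2) bij_betwE by blast

lemma AutG_inj: "r \<in> Ind \<Longrightarrow> r' \<in> Ind \<Longrightarrow> F r = F r' \<Longrightarrow> r = r'"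
  using AutG_D(2) unfolding bij_betw_def inj_on_def by blast

lemma AutG_surj:
  assumes "r \<in> Ind" shows "\<exists>d\<in>Ind. F d = r"
proof -
  have "r \<in> F ` Ind" using AutG_D(2) assms by (simp add: bij_betw_def)
  thus ?thesis by blast
qed

lemma AutG_zero: "F (\<lambda>x. 0) = (\<lambda>x. 0)"
proof -
  have "F (\<lambda>x. 0 + 0) = (\<lambda>x. F (\<lambda>x. 0) x + F (\<lambda>x. 0) x)" using AutG_add[OF Ind_zero Ind_zero] .
  thus ?thesis by (simp add: fun_eq_iff)
qed

lemma AutG_eq_zero_iff: "r \<in> Ind \<Longrightarrow> F r = (\<lambda>x. 0) \<longleftrightarrow> r = (\<lambda>x. 0)"
  using AutG_inj[OF _ Ind_zero] AutG_zero by auto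

end

subsection \<open>Central idempotents\<close>

definition ind_central_idem :: "('g \<Rightarrow> 'b) \<Rightarrow> bool" where
  "ind_central_idem e \<longleftrightarrow> e \<in> Ind \<and> (\<lambda>x. e x * e x) = e \<and>
     (\<forall>r\<in>Ind. (\<lambda>x. e x * r x) = (\<lambda>x. r x * e x))"

text \<open>Evaluating at \<open>x\<close> against the elements \<open>ind_point x b\<close> shows that \<open>e x\<close> is a central idempotent of \<open>B\<close>.\<close>
lemma ind_central_idem_values:
  assumes e: "ind_central_idem e" and x: "x \<in> carrier G"
  shows "e x = 0 \<or> e x = 1"
proof (rule simple_algebra_central_idem[OF k_alg simple])
  have "(\<lambda>x. e x * e x) = e" using e unfolding ind_central_idem_def by blast
  from fun_cong[OF this, of x] show "e x * e x = e x" .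
  fix b
  have "(\<lambda>y. e y * ind_point x b y) = (\<lambda>y. ind_point x b y * e y)"
    using e Ind_ind_point[OF x] unfolding ind_central_idem_def by blast
  from fun_cong[OF this, of x] show "e x * b = b * e x" using x by simp
qed

lemma ind_central_idem_chi_rcos: "g \<in> carrier G \<Longrightarrow> ind_central_idem (chi (S #> g))"
  unfolding ind_central_idem_def using Ind_chi_rcos chi_mult_self chi_mult_commute by blast

lemma AutG_central_idem_iff:
  assumes F: "F \<in> AutInd" and e: "e \<in> Ind"
  shows "ind_central_idem (F e) \<longleftrightarrow> ind_central_idem e"
proof
  assume Fe: "ind_central_idem (F e)"
  have "F (\<lambda>x. e x * e x) = F e"
    using Fe AutG_mult[OF F e e] unfolding ind_central_idem_def by simp
  hence "(\<lambda>x. e x * e x) = e" using AutG_inj[OF F Ind_mult[OF e e] e] by blast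
  moreover have "(\<lambda>x. e x * r x) = (\<lambda>x. r x * e x)" if r: "r \<in> Ind" for r
  proof (rule AutG_inj[OF F Ind_mult[OF e r] Ind_mult[OF r e]])
    show "F (\<lambda>x. e x * r x) = F (\<lambda>x. r x * e x)"
      using Fe AutG_Ind[OF F r] AutG_mult[OF F e r] AutG_mult[OF F r e]
      unfolding ind_central_idem_def by simp
  qed
  ultimately show "ind_central_idem e" using e unfolding ind_central_idem_def by blast
next
  assume e_ci: "ind_central_idem e"
  have "(\<lambda>x. F e x * F e x) = F e"
    using e_ci AutG_mult[OF F e e] unfolding ind_central_idem_def by simp
  moreover have "(\<lambda>x. F e x * r x) = (\<lambda>x. r x * F e x)" if r: "r \<in> Ind" for r
  proof -
    obtain d where d: "d \<in> Ind" "F d = r" using AutG_surj[OF F r] by blast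
    thus ?thesis using e_ci AutG_mult[OF F e d(1)] AutG_mult[OF F d(1) e]
      unfolding ind_central_idem_def by metis
  qed
  ultimately show "ind_central_idem (F e)" using AutG_Ind[OF F e] unfolding ind_central_idem_def by blast
qed

lemma ind_central_idem_le_chi_S:
  assumes d: "ind_central_idem d" and below: "(\<lambda>x. d x * chi S x) = d" and nonzero: "d \<noteq> (\<lambda>x. 0)"
  shows "d = chi S"
proof -
  have dI: "d \<in> Ind" using d unfolding ind_central_idem_def by blast
  obtain y where "d y \<noteq> 0" using nonzero by auto
  hence y: "y \<in> carrier G" and dy: "d y = 1"
    using Ind_outside[OF dI] ind_central_idem_values[OF d] by blast+
  have yS: "y \<in> S" using fun_cong[OF below, of y] dy by (auto simp: chi_def split: if_splits)
  have "d \<one> = d (inv y \<otimes> y)" using y by simp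
  also have "\<dots> = act (inv y) (d y)" using Ind_equivariant[OF dI S_inv[OF yS] y] .
  finally have d1: "d \<one> = 1" using dy yS by simp
  have "d = ind_point \<one> (d \<one>)" using Ind_supported_on_S[OF dI below] .
  also have "\<dots> = chi S" unfolding d1 by (rule ind_point_one_unit)
  finally show ?thesis .
qed

lemma chi_rcos_mult_Ind_eq:
  assumes e: "e \<in> Ind" and g: "g \<in> carrier G" and eg: "e g = 1"
  shows "(\<lambda>x. chi (S #> g) x * e x) = chi (S #> g)"
proof
  fix x show "chi (S #> g) x * e x = chi (S #> g) x"
  proof (cases "x \<in> S #> g")
    case True
    then obtain s where "s \<in> S" "x = s \<otimes> g" using rcos_S_elem by blast
    thus ?thesis using Ind_equivariant[OF e _ g] eg by (simp add: chi_def)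
  qed (simp add: chi_def)
qed

text \<open>\<open>F (chi S)\<close> is a nonzero central idempotent, so it dominates some \<open>chi (S #> g)\<close>; the preimage of
  \<open>chi (S #> g)\<close> is then a nonzero central idempotent below the primitive one \<open>chi S\<close>.\<close>
lemma AutG_chi_S:
  assumes F: "F \<in> AutInd"
  shows "\<exists>g\<in>carrier G. F (chi S) = chi (S #> g)"
proof -
  define e where "e = F (chi S)"
  have eI: "e \<in> Ind" unfolding e_def using AutG_Ind[OF F Ind_chi_S] .
  have e_ci: "ind_central_idem e"
    unfolding e_def
    using AutG_central_idem_iff[OF F Ind_chi_S] ind_central_idem_chi_rcos[OF one_closed] S_subset
    by simp
  have "chi S \<one> = (1 :: 'b)" by (simp add: chi_def)
  hence "chi S \<noteq> (\<lambda>x. 0 :: 'b)" by auto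
  hence "e \<noteq> (\<lambda>x. 0)" unfolding e_def using AutG_eq_zero_iff[OF F Ind_chi_S] by blast
  then obtain g where "e g \<noteq> 0" by auto
  hence g: "g \<in> carrier G" and eg: "e g = 1"
    using Ind_outside[OF eI] ind_central_idem_values[OF e_ci] by blast+
  obtain d where dI: "d \<in> Ind" and Fd: "F d = chi (S #> g)"
    using AutG_surj[OF F Ind_chi_rcos[OF g]] by blast
  have d_ci: "ind_central_idem d"
    using AutG_central_idem_iff[OF F dI] ind_central_idem_chi_rcos[OF g] Fd by simp
  have "F (\<lambda>x. d x * chi S x) = F d"
    using AutG_mult[OF F dI Ind_chi_S] Fd chi_rcos_mult_Ind_eq[OF eI g eg] unfolding e_def by simp
  hence "(\<lambda>x. d x * chi S x) = d" using AutG_inj[OF F Ind_mult[OF dI Ind_chi_S] dI] by blast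
  moreover have "d \<noteq> (\<lambda>x. 0)"
    using AutG_eq_zero_iff[OF F dI] Fd fun_cong[of "chi (S #> g)" "\<lambda>x. 0 :: 'b" g]
    by (auto simp: chi_def rcos_self[OF g subgroup_S])
  ultimately have "d = chi S" using ind_central_idem_le_chi_S[OF d_ci] by blast
  thus ?thesis using Fd g by blast
qed

lemma AutG_chi_S_normalizer:
  assumes F: "F \<in> AutInd" and g: "g \<in> carrier G" and Fg: "F (chi S) = chi (S #> g)"
  shows "g \<in> normalizer G S"
proof (rule normalizerI_finite[OF finite_subset[OF S_subset finite_carrier] S_subset g])
  fix t assume t: "t \<in> S"
  have "chi (S #> g) = ind_act G t (chi (S #> g) :: 'g \<Rightarrow> 'b)"
    using AutG_ind_act[OF F _ Ind_chi_S, of t] t Fg ind_act_chi_S[OF t] by simp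
  from fun_cong[OF this, of g]
  have "chi (S #> g) (g \<otimes> t) = (1::'b)"
    using g rcos_self[OF g subgroup_S] by (simp add: ind_act_def chi_def)
  hence "g \<otimes> t \<in> S #> g" by (simp add: chi_def split: if_splits)
  thus "g \<otimes> t \<otimes> inv g \<in> S" using rcos_S_iff g t by simp
qed

lemma AutG_pi_map_rcos:
  assumes F: "F \<in> AutInd"
  shows "\<exists>g\<in>normalizer G S. F (chi S) = chi (S #> g) \<and> pi_map G S F = S #> g"
  using AutG_chi_S[OF F] AutG_chi_S_normalizer[OF F] pi_map_eq[OF is_group S_subset] by blast

lemma pi_map_hom: "pi_map G S \<in> hom (AutG_group G S sc act) (normalizer_quot G S)"
proof (rule homI)
  fix F assume "F \<in> carrier (AutG_group G S sc act)"
  thus "pi_map G S F \<in> carrier (normalizer_quot G S)"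
    using AutG_pi_map_rcos normalizer_quot_carrier by (force simp: AutG_group_def)
next
  fix F F' assume "F \<in> carrier (AutG_group G S sc act)" "F' \<in> carrier (AutG_group G S sc act)"
  hence F: "F \<in> AutInd" and F': "F' \<in> AutInd" by (simp_all add: AutG_group_def)
  obtain a where a: "a \<in> normalizer G S" "F (chi S) = chi (S #> a)" "pi_map G S F = S #> a"
    using AutG_pi_map_rcos[OF F] by blast
  obtain b where b: "b \<in> normalizer G S" "F' (chi S) = chi (S #> b)" "pi_map G S F' = S #> b"
    using AutG_pi_map_rcos[OF F'] by blast
  have ac: "a \<in> carrier G" and bc: "b \<in> carrier G" using a b normalizer_carrier by auto
  have "restrict (F \<circ> F') Ind (chi S) = F (ind_act G (inv b) (chi S))"
    using Ind_chi_S b chi_rcos_ind_act[OF bc] by simp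
  also have "\<dots> = ind_act G (inv b) (chi (S #> a))"
    using AutG_ind_act[OF F _ Ind_chi_S] bc a by simp
  also have "\<dots> = chi (S #> (a \<otimes> b))"
    using ind_act_chi_rcos[OF is_group subgroup_S ac inv_closed[OF bc]] bc by simp
  finally have "pi_map G S (restrict (F \<circ> F') Ind) = S #> (a \<otimes> b)"
    by (rule pi_map_eq[OF is_group S_subset m_closed[OF ac bc]])
  thus "pi_map G S (F \<otimes>\<^bsub>AutG_group G S sc act\<^esub> F')
      = pi_map G S F \<otimes>\<^bsub>normalizer_quot G S\<^esub> pi_map G S F'"
    using rcos_mult_normalizer[OF subgroup_S a(1) b(1)] a(3) b(3)
    by (simp add: AutG_group_def normalizer_quot_mult)
qed

subsection \<open>Induction of automorphisms\<close>

lemma AutS_D: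
  "f \<in> AutS S sc act \<Longrightarrow> bij f" "f \<in> AutS S sc act \<Longrightarrow> alg_hom sc f"
  "f \<in> AutS S sc act \<Longrightarrow> s \<in> S \<Longrightarrow> f (act s b) = act s (f b)"
  unfolding AutS_def by blast+

lemma AutS_inv_into: "f \<in> AutS S sc act \<Longrightarrow> inv_into UNIV f \<in> AutS S sc act"
  unfolding AutS_def
  by (auto simp: bij_imp_bij_inv alg_hom_inv_into bij_is_inj bij_is_surj surj_f_inv_f
           intro!: inv_f_eq)

lemma Ind_comp_AutS: "f \<in> AutS S sc act \<Longrightarrow> r \<in> Ind \<Longrightarrow> f \<circ> r \<in> Ind"
  by (rule Ind_comp) (auto simp: AutS_def)

lemma ind_map_apply: "r \<in> Ind \<Longrightarrow> ind_map G S act f r = f \<circ> r"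
  by (simp add: ind_map_def)

lemma ind_map_AutG:
  assumes f: "f \<in> AutS S sc act" shows "ind_map G S act f \<in> AutInd"
proof -
  define f' where "f' = inv_into UNIV f"
  have f': "f' \<in> AutS S sc act" unfolding f'_def using AutS_inv_into[OF f] .
  have hom: "alg_hom sc f" using AutS_D(2)[OF f] .
  have "bij_betw (ind_map G S act f) Ind Ind"
  proof (rule bij_betw_byWitness[where f'="ind_map G S act f'"])
    show "\<forall>r\<in>Ind. ind_map G S act f' (ind_map G S act f r) = r"
      using Ind_comp_AutS[OF f] AutS_D(1)[OF f]
      by (simp add: ind_map_apply f'_def comp_def bij_is_inj)
    show "\<forall>r\<in>Ind. ind_map G S act f (ind_map G S act f' r) = r"
      using Ind_comp_AutS[OF f'] AutS_D(1)[OF f]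
      by (simp add: ind_map_apply f'_def comp_def bij_is_surj surj_f_inv_f)
  qed (use Ind_comp_AutS f f' in \<open>auto simp: ind_map_apply\<close>)
  moreover have "ind_map G S act f (ind_one G) = ind_one G"
    using Ind_one alg_hom_zero[OF hom] hom by (auto simp: ind_map_apply ind_one_def alg_hom_def)
  moreover have "ind_map G S act f (ind_act G g r) = ind_act G g (ind_map G S act f r)"
    if "g \<in> carrier G" "r \<in> Ind" for g r
    using Ind_ind_act[OF that] that alg_hom_zero[OF hom]
    by (simp add: ind_map_apply ind_act_def comp_def fun_eq_iff)
  ultimately show ?thesis
    using hom Ind_add Ind_mult Ind_scale
    by (simp add: AutG_def Let_def ind_map_apply comp_def alg_hom_def ind_map_def)
qed

lemma ind_map_hom: "ind_map G S act \<in> hom (AutS_group S sc act) (AutG_group G S sc act)"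
proof (rule homI)
  fix f assume "f \<in> carrier (AutS_group S sc act)"
  thus "ind_map G S act f \<in> carrier (AutG_group G S sc act)"
    using ind_map_AutG by (simp add: AutS_group_def AutG_group_def)
next
  fix f f' assume "f \<in> carrier (AutS_group S sc act)" "f' \<in> carrier (AutS_group S sc act)"
  hence "f' \<in> AutS S sc act" by (simp add: AutS_group_def)
  hence "f' \<circ> r \<in> Ind" if "r \<in> Ind" for r
    using Ind_comp_AutS that by blast
  hence "ind_map G S act (f \<circ> f') = restrict (ind_map G S act f \<circ> ind_map G S act f') Ind"
    by (intro ext) (auto simp: ind_map_apply ind_map_def comp_assoc)
  thus "ind_map G S act (f \<otimes>\<^bsub>AutS_group S sc act\<^esub> f')
      = ind_map G S act f \<otimes>\<^bsub>AutG_group G S sc act\<^esub> ind_map G S act f'"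
    by (simp add: AutS_group_def AutG_group_def)
qed

lemma ind_map_inj: "inj_on (ind_map G S act) (AutS S sc act)"
proof (rule inj_onI)
  fix f f' assume "ind_map G S act f = ind_map G S act f'"
  hence "ind_map G S act f (ind_point \<one> b) \<one> = ind_map G S act f' (ind_point \<one> b) \<one>" for b
    by simp
  thus "f = f'" using Ind_ind_point_one by (simp add: ind_map_apply fun_eq_iff)
qed

lemma ind_map_chi_S:
  assumes "f \<in> AutS S sc act" shows "ind_map G S act f (chi S) = chi S"
proof -
  have h: "alg_hom sc f" using AutS_D(2)[OF assms] .
  thus ?thesis using Ind_chi_S alg_hom_zero[OF h]
    by (auto simp: ind_map_apply chi_def alg_hom_def fun_eq_iff)
qed

subsection \<open>From automorphisms to twisted isomorphisms\<close>

text \<open>The isomorphism \<open>B \<rightarrow> B\<^sup>(\<^sup>g\<^sup>)\<close> attached to \<open>F\<close>: identify \<open>B\<close> with \<open>chi S \<cdot> Ind\<close>, apply \<open>F\<close>,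
  and read off the value at \<open>g\<close>.\<close>
definition aut_eval :: "(('g \<Rightarrow> 'b) \<Rightarrow> 'g \<Rightarrow> 'b) \<Rightarrow> 'g \<Rightarrow> 'b \<Rightarrow> 'b" where
  "aut_eval F g b = F (ind_point \<one> b) g"

context
  fixes F g
  assumes F: "F \<in> AutInd" and g: "g \<in> carrier G" and Fg: "F (chi S) = chi (S #> g)"
begin

lemma aut_eval_alg_hom: "alg_hom sc (aut_eval F g)"
  unfolding alg_hom_def aut_eval_def
  using AutG_add[OF F Ind_ind_point_one Ind_ind_point_one]
    AutG_mult[OF F Ind_ind_point_one Ind_ind_point_one] AutG_scale[OF F Ind_ind_point_one]
    Fg rcos_self[OF g subgroup_S]
  by (simp add: ind_point_one_add ind_point_one_mult ind_point_one_scale ind_point_one_unit chi_def)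

lemma aut_eval_twisted:
  assumes s: "s \<in> S"
  shows "aut_eval F g (act s b) = act (g \<otimes> s \<otimes> inv g) (aut_eval F g b)"
proof -
  have conj: "g \<otimes> s \<otimes> inv g \<in> S"
    using normalizer_conj[OF S_subset AutG_chi_S_normalizer[OF F g Fg] s] .
  have "aut_eval F g (act s b) = ind_act G s (F (ind_point \<one> b)) g"
    unfolding aut_eval_def ind_act_ind_point_one[OF s, symmetric]
    using AutG_ind_act[OF F _ Ind_ind_point_one] s by simp
  also have "\<dots> = F (ind_point \<one> b) ((g \<otimes> s \<otimes> inv g) \<otimes> g)"
    using g s by (simp add: ind_act_def m_assoc)
  also have "\<dots> = act (g \<otimes> s \<otimes> inv g) (aut_eval F g b)"
    unfolding aut_eval_def using Ind_equivariant[OF AutG_Ind[OF F Ind_ind_point_one] conj g] .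
  finally show ?thesis .
qed

lemma aut_eval_supported:
  assumes "x \<notin> S #> g" shows "F (ind_point \<one> b) x = 0"
proof -
  have "F (ind_point \<one> b) = (\<lambda>x. F (ind_point \<one> b) x * chi (S #> g) x)"
    using AutG_mult[OF F Ind_ind_point_one Ind_chi_S] Fg by (simp add: ind_point_one_mult_chi_S)
  from fun_cong[OF this, of x] show ?thesis using assms by (simp add: chi_def)
qed

lemma aut_eval_inj: "inj (aut_eval F g)"
proof -
  have "b = 0" if "aut_eval F g b = 0" for b
  proof -
    have "F (ind_point \<one> b) x = 0" for x
    proof (cases "x \<in> S #> g")
      case True
      then obtain s where "s \<in> S" "x = s \<otimes> g" using rcos_S_elem by blast
      thus ?thesis using that Ind_equivariant[OF AutG_Ind[OF F Ind_ind_point_one] _ g]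
        by (simp add: aut_eval_def)
    qed (rule aut_eval_supported)
    hence "ind_point \<one> b = (\<lambda>x. 0)"
      using AutG_eq_zero_iff[OF F Ind_ind_point_one] by blast
    from fun_cong[OF this, of \<one>] show "b = 0" by (simp add: ind_point_one)
  qed
  thus ?thesis using alg_hom_diff[OF aut_eval_alg_hom] by (metis injI right_minus_eq)
qed

text \<open>The preimage of \<open>ind_point g c\<close> is supported on \<open>S\<close>, hence of the form \<open>ind_point \<one> b\<close>.\<close>
lemma aut_eval_surj: "surj (aut_eval F g)"
proof -
  have "c \<in> range (aut_eval F g)" for c
  proof -
    obtain d where dI: "d \<in> Ind" and Fd: "F d = ind_point g c"
      using AutG_surj[OF F Ind_ind_point[OF g]] by blast
    have "(\<lambda>x. ind_point g c x * chi (S #> g) x) = ind_point g c"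
      by (rule ext) (simp add: chi_def ind_point_outside[OF g])
    hence "F (\<lambda>x. d x * chi S x) = F d" using AutG_mult[OF F dI Ind_chi_S] Fd Fg by simp
    hence "(\<lambda>x. d x * chi S x) = d" using AutG_inj[OF F Ind_mult[OF dI Ind_chi_S] dI] by blast
    hence "d = ind_point \<one> (d \<one>)" using Ind_supported_on_S[OF dI] by blast
    hence "aut_eval F g (d \<one>) = c" unfolding aut_eval_def using Fd g by (metis ind_point_self)
    thus ?thesis by (metis rangeI)
  qed
  thus ?thesis by blast
qed

lemma aut_eval_bij: "bij (aut_eval F g)"
  using aut_eval_inj aut_eval_surj by (rule bijI)

lemma aut_eval_iso_twist: "iso_twist G S sc act g"
  unfolding iso_twist_def using aut_eval_bij aut_eval_alg_hom aut_eval_twisted by blast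

end

text \<open>An automorphism fixing \<open>chi S\<close> is determined by its restriction to \<open>chi S \<cdot> Ind \<cong> B\<close>, since
  every \<open>r\<close> is recovered from the translates \<open>chi S \<cdot> (x \<cdot> r)\<close>.\<close>
lemma AutG_eq_ind_map:
  assumes F: "F \<in> AutInd" and FS: "F (chi S) = chi S"
  shows "F = ind_map G S act (aut_eval F \<one>)"
proof
  have F1: "F (chi S) = chi (S #> \<one>)" using FS S_subset by simp
  fix r show "F r = ind_map G S act (aut_eval F \<one>) r"
  proof (cases "r \<in> Ind")
    case False thus ?thesis using AutG_extensional[OF F] by (simp add: ind_map_def extensional_def)
  next
    case r: True
    show ?thesis
    proof
      fix x show "F r x = ind_map G S act (aut_eval F \<one>) r x"
      proof (cases "x \<in> carrier G")
        case False
        thus ?thesis using Ind_outside[OF AutG_Ind[OF F r]] Ind_outside[OF r] r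
            alg_hom_zero[OF aut_eval_alg_hom[OF F one_closed F1]]
          by (simp add: ind_map_apply)
      next
        case x: True
        have r_x: "(\<lambda>y. ind_act G x r y * chi S y) = ind_point \<one> (r x)"
          using Ind_equivariant[OF r _ x] by (auto simp: ind_act_def chi_def ind_point_one)
        have "F r x = F (ind_act G x r) \<one>"
          using AutG_ind_act[OF F x r] x by (simp add: ind_act_def)
        also have "\<dots> = F (\<lambda>y. ind_act G x r y * chi S y) \<one>"
          using AutG_mult[OF F Ind_ind_act[OF x r] Ind_chi_S] FS by (simp add: chi_def)
        also have "\<dots> = aut_eval F \<one> (r x)" unfolding r_x aut_eval_def ..
        finally show ?thesis using r by (simp add: ind_map_apply)
      qed
    qed
  qed
qed

lemma ind_map_image_eq_kernel:
  "ind_map G S act ` AutS S sc act = kernel (AutG_group G S sc act) (normalizer_quot G S) (pi_map G S)"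
proof (intro equalityI subsetI)
  fix F assume "F \<in> ind_map G S act ` AutS S sc act"
  then obtain f where f: "f \<in> AutS S sc act" and F: "F = ind_map G S act f" by blast
  have "pi_map G S F = S"
    using pi_map_eq[OF is_group S_subset one_closed, of F] ind_map_chi_S[OF f] F S_subset by simp
  thus "F \<in> kernel (AutG_group G S sc act) (normalizer_quot G S) (pi_map G S)"
    using ind_map_AutG[OF f] F by (simp add: kernel_def AutG_group_def normalizer_quot_one)
next
  fix F assume "F \<in> kernel (AutG_group G S sc act) (normalizer_quot G S) (pi_map G S)"
  hence F: "F \<in> AutInd" and piF: "pi_map G S F = S"
    by (simp_all add: kernel_def AutG_group_def normalizer_quot_one)
  obtain a where a: "a \<in> normalizer G S" "F (chi S) = chi (S #> a)" "pi_map G S F = S #> a"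
    using AutG_pi_map_rcos[OF F] by blast
  hence FS: "F (chi S) = chi S" using piF by simp
  hence F1: "F (chi S) = chi (S #> \<one>)" using S_subset by simp
  have "aut_eval F \<one> \<in> AutS S sc act"
    unfolding AutS_def
    using aut_eval_bij[OF F one_closed F1] aut_eval_alg_hom[OF F one_closed F1]
      aut_eval_twisted[OF F one_closed F1]
    by simp
  thus "F \<in> ind_map G S act ` AutS S sc act" using AutG_eq_ind_map[OF F FS] by blast
qed

subsection \<open>From twisted isomorphisms to automorphisms\<close>

definition twisted_equivariant :: "('b \<Rightarrow> 'b) \<Rightarrow> 'g \<Rightarrow> bool" where
  "twisted_equivariant \<phi> g \<longleftrightarrow> (\<forall>s\<in>S. \<forall>b. \<phi> (act s b) = act (g \<otimes> s \<otimes> inv g) (\<phi> b))"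

definition twist_aut :: "('b \<Rightarrow> 'b) \<Rightarrow> 'g \<Rightarrow> ('g \<Rightarrow> 'b) \<Rightarrow> 'g \<Rightarrow> 'b" where
  "twist_aut \<phi> g = restrict (\<lambda>r x. if x \<in> carrier G then \<phi> (r (inv g \<otimes> x)) else 0) Ind"

lemma twist_aut_apply:
  "r \<in> Ind \<Longrightarrow> twist_aut \<phi> g r = (\<lambda>x. if x \<in> carrier G then \<phi> (r (inv g \<otimes> x)) else 0)"
  by (simp add: twist_aut_def)

lemma Ind_twist_aut:
  assumes hom: "alg_hom sc \<phi>" and tw: "twisted_equivariant \<phi> g" and g: "g \<in> normalizer G S"
    and r: "r \<in> Ind"
  shows "twist_aut \<phi> g r \<in> Ind"
  unfolding twist_aut_apply[OF r]
proof (rule IndI)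
  fix s y assume s: "s \<in> S" and y: "y \<in> carrier G"
  have gc: "g \<in> carrier G" using normalizer_carrier[OF g] .
  define u where "u = inv g \<otimes> s \<otimes> g"
  have u: "u \<in> S" unfolding u_def using normalizer_conj_inv[OF S_subset g s] .
  have "\<phi> (r (inv g \<otimes> (s \<otimes> y))) = \<phi> (r (u \<otimes> (inv g \<otimes> y)))"
    unfolding u_def using gc s y by (simp add: m_assoc)
  also have "\<dots> = act (g \<otimes> u \<otimes> inv g) (\<phi> (r (inv g \<otimes> y)))"
    using Ind_equivariant[OF r u] tw u gc y unfolding twisted_equivariant_def by simp
  also have "g \<otimes> u \<otimes> inv g = s" unfolding u_def using gc s by (simp add: m_assoc)
  finally show "(if s \<otimes> y \<in> carrier G then \<phi> (r (inv g \<otimes> (s \<otimes> y))) else 0)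
      = act s (if y \<in> carrier G then \<phi> (r (inv g \<otimes> y)) else 0)" using s y by simp
qed simp

lemma twisted_equivariant_inv_into:
  assumes b: "bij \<phi>" and tw: "twisted_equivariant \<phi> g" and g: "g \<in> normalizer G S"
  shows "twisted_equivariant (inv_into UNIV \<phi>) (inv g)"
  unfolding twisted_equivariant_def
proof (intro ballI allI)
  fix s c assume s: "s \<in> S"
  have gc: "g \<in> carrier G" using normalizer_carrier[OF g] .
  define u where "u = inv g \<otimes> s \<otimes> g"
  have u: "u \<in> S" unfolding u_def using normalizer_conj_inv[OF S_subset g s] .
  have "g \<otimes> u \<otimes> inv g = s" unfolding u_def using gc s by (simp add: m_assoc)
  hence "\<phi> (act u (inv_into UNIV \<phi> c)) = act s c"
    using tw u b unfolding twisted_equivariant_def by (simp add: bij_is_surj surj_f_inv_f)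
  hence "inv_into UNIV \<phi> (act s c) = act u (inv_into UNIV \<phi> c)"
    using b by (metis bij_is_inj inv_f_f)
  thus "inv_into UNIV \<phi> (act s c) = act (inv g \<otimes> s \<otimes> inv (inv g)) (inv_into UNIV \<phi> c)"
    unfolding u_def using gc by simp
qed

lemma twist_aut_AutG:
  assumes b: "bij \<phi>" and hom: "alg_hom sc \<phi>" and tw: "twisted_equivariant \<phi> g"
    and g: "g \<in> normalizer G S"
  shows "twist_aut \<phi> g \<in> AutInd"
proof -
  define \<psi> where "\<psi> = inv_into UNIV \<phi>"
  have gc: "g \<in> carrier G" using normalizer_carrier[OF g] .
  have \<phi>\<psi>: "\<phi> (\<psi> c) = c" and \<psi>\<phi>: "\<psi> (\<phi> c) = c" for c
    unfolding \<psi>_def using b by (simp_all add: bij_is_surj surj_f_inv_f bij_is_inj)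
  have twI: "twist_aut \<phi> g r \<in> Ind" if "r \<in> Ind" for r
    using Ind_twist_aut[OF hom tw g that] .
  have twI': "twist_aut \<psi> (inv g) r \<in> Ind" if "r \<in> Ind" for r
    using Ind_twist_aut[OF alg_hom_inv_into[OF b hom] twisted_equivariant_inv_into[OF b tw g]
        subgroup.m_inv_closed[OF normalizer_imp_subgroup[OF S_subset] g] that]
    unfolding \<psi>_def .
  have "bij_betw (twist_aut \<phi> g) Ind Ind"
  proof (rule bij_betw_byWitness[where f'="twist_aut \<psi> (inv g)"])
    show "\<forall>r\<in>Ind. twist_aut \<psi> (inv g) (twist_aut \<phi> g r) = r"
      using twI gc Ind_outside by (auto simp: twist_aut_apply \<psi>\<phi> fun_eq_iff)
    show "\<forall>r\<in>Ind. twist_aut \<phi> g (twist_aut \<psi> (inv g) r) = r"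
      using twI' gc Ind_outside by (auto simp: twist_aut_apply \<phi>\<psi> fun_eq_iff)
  qed (use twI twI' in blast)+
  moreover have "twist_aut \<phi> g (ind_one G) = ind_one G"
    using Ind_one gc hom by (simp add: twist_aut_apply ind_one_def fun_eq_iff alg_hom_def)
  moreover have "twist_aut \<phi> g (ind_act G k r) = ind_act G k (twist_aut \<phi> g r)"
    if "k \<in> carrier G" "r \<in> Ind" for k r
    using Ind_ind_act[OF that] that gc alg_hom_zero[OF hom]
    by (simp add: twist_aut_apply ind_act_def fun_eq_iff m_assoc)
  ultimately show ?thesis
    using hom Ind_add Ind_mult Ind_scale
    by (simp add: AutG_def Let_def twist_aut_apply alg_hom_def twist_aut_def fun_eq_iff)
qed

lemma twist_aut_chi_S:
  assumes hom: "alg_hom sc \<phi>" and g: "g \<in> normalizer G S"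
  shows "twist_aut \<phi> g (chi S) = chi (S #> g)"
proof
  have gc: "g \<in> carrier G" using normalizer_carrier[OF g] .
  fix x show "twist_aut \<phi> g (chi S) x = chi (S #> g) x"
  proof (cases "x \<in> carrier G")
    case x: True
    have "inv g \<otimes> x \<in> S \<longleftrightarrow> x \<in> S #> g"
    proof
      assume "inv g \<otimes> x \<in> S"
      hence "g \<otimes> (inv g \<otimes> x) \<otimes> inv g \<in> S" using normalizer_conj[OF S_subset g] by blast
      thus "x \<in> S #> g" using rcos_S_iff gc x by simp
    next
      assume "x \<in> S #> g"
      hence "inv g \<otimes> (x \<otimes> inv g) \<otimes> g \<in> S"
        using normalizer_conj_inv[OF S_subset g] rcos_S_iff gc x by simp
      thus "inv g \<otimes> x \<in> S" using gc x by (simp add: m_assoc)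
    qed
    thus ?thesis using x Ind_chi_S hom alg_hom_zero[OF hom]
      by (simp add: twist_aut_apply chi_def alg_hom_def)
  next
    case False
    thus ?thesis using Ind_chi_S r_coset_subset_G[OF S_subset gc]
      by (auto simp: twist_aut_apply chi_def)
  qed
qed

lemma pi_map_surj_iff:
  "pi_map G S ` AutInd = carrier (normalizer_quot G S) \<longleftrightarrow> (\<forall>g\<in>normalizer G S. iso_twist G S sc act g)"
proof
  assume surj: "pi_map G S ` AutInd = carrier (normalizer_quot G S)"
  show "\<forall>g\<in>normalizer G S. iso_twist G S sc act g"
  proof
    fix g assume g: "g \<in> normalizer G S"
    hence "S #> g \<in> pi_map G S ` AutInd" using surj normalizer_quot_carrier[of G S] by auto
    then obtain F where F: "F \<in> AutInd" and piF: "pi_map G S F = S #> g" by blast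
    obtain a where a: "a \<in> normalizer G S" "F (chi S) = chi (S #> a)" "pi_map G S F = S #> a"
      using AutG_pi_map_rcos[OF F] by blast
    thus "iso_twist G S sc act g"
      using aut_eval_iso_twist[OF F normalizer_carrier[OF g]] piF by simp
  qed
next
  assume iso: "\<forall>g\<in>normalizer G S. iso_twist G S sc act g"
  have "S #> g \<in> pi_map G S ` AutInd" if g: "g \<in> normalizer G S" for g
  proof -
    obtain \<phi> where "bij \<phi>" "alg_hom sc \<phi>" "twisted_equivariant \<phi> g"
      using iso g unfolding iso_twist_def twisted_equivariant_def by blast
    thus ?thesis
      using twist_aut_AutG twist_aut_chi_S g normalizer_carrier[OF g]
        pi_map_eq[OF is_group S_subset]
      by (metis imageI)
  qed
  moreover have "pi_map G S ` AutInd \<subseteq> carrier (normalizer_quot G S)"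
    using pi_map_hom by (auto simp: hom_def AutG_group_def)
  ultimately show "pi_map G S ` AutInd = carrier (normalizer_quot G S)"
    using normalizer_quot_carrier[of G S] by auto
qed

end

theorem proposition3p1:
  fixes G :: "'g monoid" and S :: "'g set"
    and sc :: "'k::field \<Rightarrow> 'b::ring_1 \<Rightarrow> 'b" and act :: "'g \<Rightarrow> 'b \<Rightarrow> 'b"
  assumes "group G" and "finite (carrier G)" and "subgroup S G"
    and "galois_algebra G S sc act" and "simple_algebra sc"
  shows "ind_map G S act \<in> hom (AutS_group S sc act) (AutG_group G S sc act)
       \<and> inj_on (ind_map G S act) (AutS S sc act)
       \<and> pi_map G S \<in> hom (AutG_group G S sc act) (normalizer_quot G S)
       \<and> ind_map G S act ` AutS S sc act
           = kernel (AutG_group G S sc act) (normalizer_quot G S) (pi_map G S)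
       \<and> (pi_map G S ` AutG G S sc act = carrier (normalizer_quot G S)
           \<longleftrightarrow> (\<forall>g\<in>normalizer G S. iso_twist G S sc act g))"
proof -
  have "S_algebra G S sc act" using assms(4) unfolding galois_algebra_def by blast
  then interpret ind_setting G S sc act
    using assms by (simp add: ind_setting_def ind_setting_axioms_def)
  show ?thesis
    using ind_map_hom ind_map_inj pi_map_hom ind_map_image_eq_kernel pi_map_surj_iff by blast
qed

end
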